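(* For each $n\ge1$, the maximum number of target-free cliques in a simple directed graph on $n$ nodes equals the maximum number of maximal cliques in a simple undirected graph on $n$ nodes.
   Context: In a simple directed graph, a clique is a nonempty set of nodes pairwise bidirectionally connected; a target of a clique $\sigma$ is a node $k\notin\sigma$ with $i\to k$ for all $i\in\sigma$; a target-free clique has no target. In an undirected graph, a maximal clique is a clique not properly contained in another clique. *)

theory Defs
  imports Main
begin

definition simple_digraph :: "nat \<Rightarrow> (nat \<Rightarrow> nat \<Rightarrow> bool) \<Rightarrow> bool" where
  "simple_digraph n E \<longleftrightarrow> (\<forall>i j. E i j \<longrightarrow> i < n \<and> j < n \<and> i \<noteq> j)"

definition simple_graph :: "nat \<Rightarrow> (nat \<Rightarrow> nat \<Rightarrow> bool) \<Rightarrow> bool" where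
  "simple_graph n E \<longleftrightarrow> simple_digraph n E \<and> (\<forall>i j. E i j \<longrightarrow> E j i)"

definition dclique :: "nat \<Rightarrow> (nat \<Rightarrow> nat \<Rightarrow> bool) \<Rightarrow> nat set \<Rightarrow> bool" where
  "dclique n E \<sigma> \<longleftrightarrow> \<sigma> \<noteq> {} \<and> \<sigma> \<subseteq> {..<n} \<and>
     (\<forall>i\<in>\<sigma>. \<forall>j\<in>\<sigma>. i \<noteq> j \<longrightarrow> E i j \<and> E j i)"

definition is_target :: "nat \<Rightarrow> (nat \<Rightarrow> nat \<Rightarrow> bool) \<Rightarrow> nat set \<Rightarrow> nat \<Rightarrow> bool" where
  "is_target n E \<sigma> k \<longleftrightarrow> k < n \<and> k \<notin> \<sigma> \<and> (\<forall>i\<in>\<sigma>. E i k)"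

definition target_free_clique :: "nat \<Rightarrow> (nat \<Rightarrow> nat \<Rightarrow> bool) \<Rightarrow> nat set \<Rightarrow> bool" where
  "target_free_clique n E \<sigma> \<longleftrightarrow> dclique n E \<sigma> \<and> \<not> (\<exists>k. is_target n E \<sigma> k)"

definition uclique :: "nat \<Rightarrow> (nat \<Rightarrow> nat \<Rightarrow> bool) \<Rightarrow> nat set \<Rightarrow> bool" where
  "uclique n E C \<longleftrightarrow> C \<noteq> {} \<and> C \<subseteq> {..<n} \<and> (\<forall>i\<in>C. \<forall>j\<in>C. i \<noteq> j \<longrightarrow> E i j)"

definition maximal_clique :: "nat \<Rightarrow> (nat \<Rightarrow> nat \<Rightarrow> bool) \<Rightarrow> nat set \<Rightarrow> bool" where
  "maximal_clique n E C \<longleftrightarrow> uclique n E C \<and> \<not> (\<exists>D. uclique n E D \<and> C \<subset> D)"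

definition num_target_free :: "nat \<Rightarrow> (nat \<Rightarrow> nat \<Rightarrow> bool) \<Rightarrow> nat" where
  "num_target_free n E = card {\<sigma>. target_free_clique n E \<sigma>}"

definition num_maximal_cliques :: "nat \<Rightarrow> (nat \<Rightarrow> nat \<Rightarrow> bool) \<Rightarrow> nat" where
  "num_maximal_cliques n E = card {C. maximal_clique n E C}"

end

theory Submission
  imports Defs
begin

text \<open>In an undirected graph a clique has a target exactly when it can be enlarged, so maximal
  cliques and target-free cliques coincide; hence every undirected count is a directed count.
  Conversely, replacing a digraph by its symmetric part (keeping only the bidirectional edges)
  leaves the cliques unchanged and can only destroy targets, so every target-free clique of the
  digraph is a maximal clique of an undirected graph on the same nodes.\<close>

definition sym_part :: "('a \<Rightarrow> 'a \<Rightarrow> bool) \<Rightarrow> 'a \<Rightarrow> 'a \<Rightarrow> bool" where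
  "sym_part E = (\<lambda>i j. E i j \<and> E j i)"

lemma simple_graph_sym_part:
  assumes "simple_digraph n E"
  shows "simple_graph n (sym_part E)"
  using assms unfolding simple_graph_def simple_digraph_def sym_part_def by blast

lemma simple_graph_imp_symp: "simple_graph n E \<Longrightarrow> symp E"
  unfolding simple_graph_def by (blast intro: sympI)

lemma dclique_sym_part_iff: "dclique n (sym_part E) \<sigma> \<longleftrightarrow> dclique n E \<sigma>"
  unfolding dclique_def sym_part_def by blast

lemma is_target_sym_part: "is_target n (sym_part E) \<sigma> k \<Longrightarrow> is_target n E \<sigma> k"
  unfolding is_target_def sym_part_def by blast

lemma target_free_clique_sym_part:
  "target_free_clique n E \<sigma> \<Longrightarrow> target_free_clique n (sym_part E) \<sigma>"
  unfolding target_free_clique_def using dclique_sym_part_iff is_target_sym_part by blast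

lemma target_free_clique_iff_maximal_clique:
  assumes "symp E"
  shows "target_free_clique n E \<sigma> \<longleftrightarrow> maximal_clique n E \<sigma>"
proof
  assume tf: "target_free_clique n E \<sigma>"
  hence u: "uclique n E \<sigma>" unfolding target_free_clique_def dclique_def uclique_def by blast
  show "maximal_clique n E \<sigma>" unfolding maximal_clique_def
  proof (intro conjI u notI)
    assume "\<exists>D. uclique n E D \<and> \<sigma> \<subset> D"
    then obtain D k where D: "uclique n E D" "\<sigma> \<subset> D" "k \<in> D" "k \<notin> \<sigma>" by blast
    have "is_target n E \<sigma> k" using D unfolding is_target_def uclique_def by auto
    thus False using tf unfolding target_free_clique_def by blast
  qed
next
  assume m: "maximal_clique n E \<sigma>"
  have d: "dclique n E \<sigma>"
    using m assms unfolding maximal_clique_def uclique_def dclique_def by (blast dest: sympD)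
  show "target_free_clique n E \<sigma>" unfolding target_free_clique_def
  proof (intro conjI d notI)
    assume "\<exists>k. is_target n E \<sigma> k"
    then obtain k where k: "is_target n E \<sigma> k" by blast
    have "uclique n E (insert k \<sigma>)" using k m assms
      unfolding is_target_def maximal_clique_def uclique_def by (auto dest: sympD)
    moreover have "\<sigma> \<subset> insert k \<sigma>" using k unfolding is_target_def by auto
    ultimately show False using m unfolding maximal_clique_def by blast
  qed
qed

lemma num_target_free_eq_num_maximal_cliques:
  assumes "symp E"
  shows "num_target_free n E = num_maximal_cliques n E"
proof -
  have "target_free_clique n E = maximal_clique n E"
    by (intro ext target_free_clique_iff_maximal_clique[OF assms])
  thus ?thesis unfolding num_target_free_def num_maximal_cliques_def by simp
qed

lemma target_free_cliques_subset_Pow: "{\<sigma>. target_free_clique n E \<sigma>} \<subseteq> Pow {..<n}"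
  unfolding target_free_clique_def dclique_def by blast

lemma finite_target_free_cliques: "finite {\<sigma>. target_free_clique n E \<sigma>}"
  using target_free_cliques_subset_Pow by (rule finite_subset) simp

lemma num_target_free_le: "num_target_free n E \<le> 2 ^ n"
proof -
  have "num_target_free n E \<le> card (Pow {..<n})"
    unfolding num_target_free_def by (intro card_mono target_free_cliques_subset_Pow) simp
  thus ?thesis by (simp add: card_Pow)
qed

lemma num_target_free_le_sym_part: "num_target_free n E \<le> num_target_free n (sym_part E)"
  unfolding num_target_free_def
  by (intro card_mono finite_target_free_cliques subsetI) (simp add: target_free_clique_sym_part)

lemma num_target_free_le_num_maximal_cliques_sym_part:
  assumes "simple_digraph n E"
  shows "num_target_free n E \<le> num_maximal_cliques n (sym_part E)"
proof -
  have G: "simple_graph n (sym_part E)" using assms by (rule simple_graph_sym_part)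
  have "num_target_free n E \<le> num_target_free n (sym_part E)"
    by (rule num_target_free_le_sym_part)
  also have "\<dots> = num_maximal_cliques n (sym_part E)"
    using simple_graph_imp_symp[OF G] by (rule num_target_free_eq_num_maximal_cliques)
  finally show ?thesis .
qed

lemma Max_eq_Max_cofinal_subset:
  fixes A B :: "'a::linorder set"
  assumes "finite A" "B \<noteq> {}" "B \<subseteq> A" "\<And>a. a \<in> A \<Longrightarrow> \<exists>b\<in>B. a \<le> b"
  shows "Max A = Max B"
proof (rule antisym)
  have "finite B" using assms(1,3) by (rule finite_subset[rotated])
  have "Max A \<in> A" using assms(1-3) by (intro Max_in) auto
  then obtain b where "b \<in> B" "Max A \<le> b" using assms(4) by blast
  thus "Max A \<le> Max B" using \<open>finite B\<close> by (meson Max_ge order_trans)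
  show "Max B \<le> Max A" using assms(3,2,1) by (rule Max_mono)
qed

theorem lemma8:
  fixes n :: nat
  assumes "n \<ge> 1"
  shows "Max {num_target_free n E | E. simple_digraph n E}
       = Max {num_maximal_cliques n E | E. simple_graph n E}"
proof (rule Max_eq_Max_cofinal_subset)
  show "finite {num_target_free n E | E. simple_digraph n E}"
    by (rule finite_subset[of _ "{..2 ^ n}"]) (auto intro: num_target_free_le)
  have "simple_graph n (\<lambda>i j. False)" by (simp add: simple_graph_def simple_digraph_def)
  thus "{num_maximal_cliques n E | E. simple_graph n E} \<noteq> {}" by blast
  show "{num_maximal_cliques n E | E. simple_graph n E}
      \<subseteq> {num_target_free n E | E. simple_digraph n E}"
  proof clarify
    fix E assume G: "simple_graph n E"
    hence "simple_digraph n E" unfolding simple_graph_def by blast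
    moreover have "num_maximal_cliques n E = num_target_free n E"
      using simple_graph_imp_symp[OF G] by (rule num_target_free_eq_num_maximal_cliques[symmetric])
    ultimately show "\<exists>E'. num_maximal_cliques n E = num_target_free n E' \<and> simple_digraph n E'"
      by blast
  qed
  show "\<exists>b\<in>{num_maximal_cliques n E | E. simple_graph n E}. a \<le> b"
    if "a \<in> {num_target_free n E | E. simple_digraph n E}" for a
    using that simple_graph_sym_part num_target_free_le_num_maximal_cliques_sym_part by blast
qed

end
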